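(* Let lines $L_1,L_2$ of $Y_m$ intersect at a point $z$ with acute angle $\delta$, and let $x,y\in L_1$ lie on the same side of $z$. Let $r_1,r_2$ be rules with distinct orientation values, the orientations chosen so that the rules map farthest from $z$, and suppose the points $r_i(x),r_i(y)\in L_2$ and $r_i(r_j(x)),r_i(r_j(y))\in L_1$ ($i,j\in\{1,2\}$, $i\neq j$) all lie on the same side of $z$. Let $\theta_1,\theta_2\in(0,\pi/2]$ be the projection angles of $r_1,r_2$ and $c_1,c_2$ their separation coefficients. Then $0\le c_1c_2<1$ if and only if $$\frac{\pi-\delta}{2}<\frac{\theta_1+\theta_2}{2}\le\frac{\pi}{2}.$$
   Context: $Y_m\subset\mathbb{R}^2$ is a union of $m\ge3$ pairwise nonparallel, not all concurrent lines. A rule with projection angle $\theta\in(0,\pi/2]$ maps a point $x$ on one line to an intersection point with the target line of a line through $x$ meeting the target line at angle $\theta$; the orientation value selects which of the two such lines is used. For a rule with projection angle $\theta$ mapping points on one side of $z$ on one of $L_1,L_2$ to points on the same side of $z$ on the other line, with orientation chosen to map farthest from $z$, one has $d(r(x),r(y))=c\,d(x,y)$ with separation coefficient $c=\sin(\gamma)/\sin(\theta)$, $\gamma=\pi-\delta-\theta$ (by the law of sines). Thus $c_i=\sin(\pi-\delta-\theta_i)/\sin(\theta_i)$. *)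

theory Defs
  imports "HOL-Analysis.Analysis"
begin

text \<open>The plane R^2 is modelled by the complex numbers.\<close>

definition line :: "complex \<Rightarrow> complex \<Rightarrow> complex set" where
  "line a u = {a + of_real t * u | t. True}"

definition is_line :: "complex set \<Rightarrow> bool" where
  "is_line L \<longleftrightarrow> (\<exists>a u. u \<noteq> 0 \<and> L = line a u)"

text \<open>A finite union of m \<ge> 3 pairwise nonparallel, not all concurrent lines
  (given by its set of lines).\<close>
definition line_config :: "complex set set \<Rightarrow> bool" where
  "line_config Y \<longleftrightarrow> finite Y \<and> card Y \<ge> 3 \<and> (\<forall>L\<in>Y. is_line L) \<and>
     (\<forall>L\<in>Y. \<forall>L'\<in>Y. L \<noteq> L' \<longrightarrow> (\<exists>!p. p \<in> L \<and> p \<in> L')) \<and>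
     \<not> (\<exists>p. \<forall>L\<in>Y. p \<in> L)"

definition same_side :: "complex \<Rightarrow> complex \<Rightarrow> complex \<Rightarrow> bool" where
  "same_side z p q \<longleftrightarrow> p \<noteq> z \<and> q \<noteq> z \<and> (\<exists>k>0. q - z = of_real k * (p - z))"

definition meets_at_angle :: "real \<Rightarrow> complex \<Rightarrow> complex \<Rightarrow> complex \<Rightarrow> complex \<Rightarrow> bool" where
  "meets_at_angle \<theta> a u p q \<longleftrightarrow> q \<in> line a u \<and> q \<noteq> p \<and>
     \<bar>Re ((q - p) * cnj u)\<bar> = cmod (q - p) * cmod u * cos \<theta>"

definition maps_farthest :: "real \<Rightarrow> complex \<Rightarrow> complex \<Rightarrow> complex \<Rightarrow> (complex \<Rightarrow> complex) \<Rightarrow> complex \<Rightarrow> bool" where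
  "maps_farthest \<theta> z a u r p \<longleftrightarrow> meets_at_angle \<theta> a u p (r p) \<and>
     (\<forall>q. meets_at_angle \<theta> a u p q \<longrightarrow> cmod (q - z) \<le> cmod (r p - z))"

definition sep_coeff :: "real \<Rightarrow> real \<Rightarrow> real" where
  "sep_coeff \<delta> \<theta> = sin (pi - \<delta> - \<theta>) / sin \<theta>"

end

theory Submission
  imports Defs
begin

text \<open>Only trigonometry is involved. Since \<open>sin (pi - \<delta> - \<theta>) = sin (\<delta> + \<theta>)\<close>, the identity
  \<open>sin (\<delta> + \<theta>1) * sin (\<delta> + \<theta>2) - sin \<theta>1 * sin \<theta>2 = sin \<delta> * sin (\<delta> + \<theta>1 + \<theta>2)\<close>
  shows that \<open>c1 * c2 < 1\<close> exactly when \<open>sin (\<delta> + \<theta>1 + \<theta>2) < 0\<close>, i.e. when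
  \<open>\<theta>1 + \<theta>2 > pi - \<delta>\<close>. Nonnegativity of \<open>c1 * c2\<close> and the bound \<open>\<theta>1 + \<theta>2 \<le> pi\<close>
  are automatic for \<open>\<delta>\<close> acute and \<open>\<theta>i \<le> pi / 2\<close>.\<close>

lemma sep_coeff_eq: "sep_coeff \<delta> \<theta> = sin (\<delta> + \<theta>) / sin \<theta>"
  unfolding sep_coeff_def by (simp add: sin_diff sin_add algebra_simps)

lemma sin_add_mult_sin_add_diff:
  fixes d a b :: real
  shows "sin (d + a) * sin (d + b) - sin a * sin b = sin d * sin (d + a + b)"
proof -
  have "sin (d + a + b) = sin d * (cos a * cos b - sin a * sin b) + cos d * (sin a * cos b + cos a * sin b)"
    by (simp add: sin_add cos_add add.assoc)
  moreover have "sin d * sin d = 1 - cos d * cos d"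
    using sin_cos_squared_add[of d] by (simp add: power2_eq_square)
  ultimately show ?thesis
    by (simp add: sin_add) algebra
qed

lemma sep_coeff_nonneg:
  assumes "0 \<le> \<delta>" "0 < \<theta>" "\<theta> < pi" "\<delta> + \<theta> \<le> pi"
  shows "0 \<le> sep_coeff \<delta> \<theta>"
  unfolding sep_coeff_eq using assms by (simp add: sin_ge_zero sin_gt_zero less_imp_le)

lemma sep_coeff_mult_less_one_iff:
  assumes "0 < \<delta>" "\<delta> < pi" "0 < sin \<theta>1" "0 < sin \<theta>2"
  shows "sep_coeff \<delta> \<theta>1 * sep_coeff \<delta> \<theta>2 < 1 \<longleftrightarrow> sin (\<delta> + \<theta>1 + \<theta>2) < 0"
proof -
  have "sep_coeff \<delta> \<theta>1 * sep_coeff \<delta> \<theta>2 < 1 \<longleftrightarrow> sin (\<delta> + \<theta>1) * sin (\<delta> + \<theta>2) < sin \<theta>1 * sin \<theta>2"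
    unfolding sep_coeff_eq using assms(3,4) by (simp add: divide_less_eq)
  also have "\<dots> \<longleftrightarrow> sin \<delta> * sin (\<delta> + \<theta>1 + \<theta>2) < 0"
    using sin_add_mult_sin_add_diff[of \<delta> \<theta>1 \<theta>2] by linarith
  also have "\<dots> \<longleftrightarrow> sin (\<delta> + \<theta>1 + \<theta>2) < 0"
    using sin_gt_zero[OF assms(1,2)] by (simp add: mult_less_0_iff)
  finally show ?thesis .
qed

lemma sin_less_zero_iff:
  fixes x :: real
  assumes "0 \<le> x" "x < 2 * pi"
  shows "sin x < 0 \<longleftrightarrow> pi < x"
  using assms sin_lt_zero[of x] sin_ge_zero[of x] by fastforce

theorem lemma1:
  fixes Y :: "complex set set" and z u1 u2 x y :: complex
    and \<delta> \<theta>1 \<theta>2 :: real and r1 r2 :: "complex \<Rightarrow> complex" and o1 o2 :: int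
  assumes Y: "line_config Y"
    and L12: "line z u1 \<in> Y" "line z u2 \<in> Y" "line z u1 \<noteq> line z u2"
    and u: "u1 \<noteq> 0" "u2 \<noteq> 0"
    and delta: "0 < \<delta>" "\<delta> < pi / 2"
      "cos \<delta> = \<bar>Re (u1 * cnj u2)\<bar> / (cmod u1 * cmod u2)"
    and xy: "x \<in> line z u1" "y \<in> line z u1" "same_side z x y"
    and theta: "0 < \<theta>1" "\<theta>1 \<le> pi / 2" "0 < \<theta>2" "\<theta>2 \<le> pi / 2"
    and orient: "o1 \<in> {-1, 1}" "o2 \<in> {-1, 1}" "o1 \<noteq> o2"
    and far1: "maps_farthest \<theta>1 z z u2 r1 x" "maps_farthest \<theta>1 z z u2 r1 y"
              "maps_farthest \<theta>1 z z u1 r1 (r2 x)" "maps_farthest \<theta>1 z z u1 r1 (r2 y)"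
    and far2: "maps_farthest \<theta>2 z z u2 r2 x" "maps_farthest \<theta>2 z z u2 r2 y"
              "maps_farthest \<theta>2 z z u1 r2 (r1 x)" "maps_farthest \<theta>2 z z u1 r2 (r1 y)"
    and side2: "\<forall>p\<in>{r1 x, r1 y, r2 x, r2 y}. \<forall>q\<in>{r1 x, r1 y, r2 x, r2 y}. same_side z p q"
    and side1: "\<forall>p\<in>{r1 (r2 x), r1 (r2 y), r2 (r1 x), r2 (r1 y)}.
                  \<forall>q\<in>{r1 (r2 x), r1 (r2 y), r2 (r1 x), r2 (r1 y)}. same_side z p q"
  shows "(0 \<le> sep_coeff \<delta> \<theta>1 * sep_coeff \<delta> \<theta>2 \<and> sep_coeff \<delta> \<theta>1 * sep_coeff \<delta> \<theta>2 < 1)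
         \<longleftrightarrow> ((pi - \<delta>) / 2 < (\<theta>1 + \<theta>2) / 2 \<and> (\<theta>1 + \<theta>2) / 2 \<le> pi / 2)"
proof -
  have nonneg: "0 \<le> sep_coeff \<delta> \<theta>1 * sep_coeff \<delta> \<theta>2"
    using delta theta by (intro mult_nonneg_nonneg sep_coeff_nonneg) auto
  have "sep_coeff \<delta> \<theta>1 * sep_coeff \<delta> \<theta>2 < 1 \<longleftrightarrow> sin (\<delta> + \<theta>1 + \<theta>2) < 0"
    using delta theta by (intro sep_coeff_mult_less_one_iff sin_gt_zero) auto
  also have "\<dots> \<longleftrightarrow> pi < \<delta> + \<theta>1 + \<theta>2"
    using delta theta by (intro sin_less_zero_iff) auto
  finally show ?thesis
    using nonneg theta by auto
qed

end
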